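(* Let $A$ be an $n\times n$ complex matrix with eigenvalues, multiplicities, $P_i$, $N_i$, $B(z)$ and $q_i$ as in the context. Then for each $i$, $$P_i=\frac{1}{(n_i-1)!}\frac{d^{n_i-1}}{dz^{n_i-1}}\left(\frac{B(z)}{q_i(z)}\right)\Big|_{z=\lambda_i},$$ and, if $n_i\ge 2$, $$N_iP_i=\frac{1}{(n_i-2)!}\frac{d^{n_i-2}}{dz^{n_i-2}}\left(\frac{B(z)}{q_i(z)}\right)\Big|_{z=\lambda_i}.$$
   Context: For an $n\times n$ complex matrix $A$ with distinct eigenvalues $\lambda_1,\dots,\lambda_m$ and algebraic multiplicities $n_1,\dots,n_m$, let $W_i=\ker(A-\lambda_i\mathbb{1})^{n_i}$ be the generalized eigenspace of $\lambda_i$, so $\mathbb{C}^n=\bigoplus_i W_i$. Let $P_i$ be the projection onto $W_i$ along $\bigoplus_{j\ne i}W_j$, and let $N_i=(A-\lambda_i\mathbb{1})P_i$. Let $p(z)=\det(z\mathbb{1}-A)=\prod_{j}(z-\lambda_j)^{n_j}$, $B(z)=\operatorname{Adj}(z\mathbb{1}-A)$ (adjugate matrix), and $q_i(z)=\prod_{j\ne i}(z-\lambda_j)^{n_j}$, which is nonzero near $\lambda_i$ so $B(z)/q_i(z)$ is analytic near $\lambda_i$. *)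

theory Defs
  imports "HOL-Analysis.Derivative" "Jordan_Normal_Form.Char_Poly" "Jordan_Normal_Form.Determinant"
begin

definition alg_mult :: "complex mat \<Rightarrow> complex \<Rightarrow> nat" where
  "alg_mult A lam = order lam (char_poly A)"

definition gen_eigenspace :: "complex mat \<Rightarrow> complex \<Rightarrow> complex Matrix.vec set" where
  "gen_eigenspace A lam = {v \<in> carrier_vec (dim_row A).
      ((A - lam \<cdot>\<^sub>m 1\<^sub>m (dim_row A)) ^\<^sub>m alg_mult A lam) *\<^sub>v v = 0\<^sub>v (dim_row A)}"

definition spectral_proj :: "complex mat \<Rightarrow> complex \<Rightarrow> complex mat" where
  "spectral_proj A lam = (THE P. P \<in> carrier_mat (dim_row A) (dim_row A) \<and>
      (\<forall>v \<in> gen_eigenspace A lam. P *\<^sub>v v = v) \<and>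
      (\<forall>mu. eigenvalue A mu \<and> mu \<noteq> lam \<longrightarrow> (\<forall>v \<in> gen_eigenspace A mu. P *\<^sub>v v = 0\<^sub>v (dim_row A))))"

definition nilp_part :: "complex mat \<Rightarrow> complex \<Rightarrow> complex mat" where
  "nilp_part A lam = (A - lam \<cdot>\<^sub>m 1\<^sub>m (dim_row A)) * spectral_proj A lam"

definition adj_res :: "complex mat \<Rightarrow> complex \<Rightarrow> complex mat" where
  "adj_res A z = adj_mat (z \<cdot>\<^sub>m 1\<^sub>m (dim_row A) - A)"

definition q_fun :: "complex mat \<Rightarrow> complex \<Rightarrow> complex \<Rightarrow> complex" where
  "q_fun A lam z = (\<Prod>mu \<in> {mu. eigenvalue A mu \<and> mu \<noteq> lam}. (z - mu) ^ alg_mult A mu)"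

end

theory Submission
  imports
    Defs
    "HOL-Analysis.FPS_Convergence"
    "HOL-Computational_Algebra.Field_as_Ring"
begin

text \<open>
  Write \<open>M = A - \<lambda>\<close>, \<open>m = n\<^sub>\<lambda>\<close> and \<open>B(\<lambda> + t)/q(\<lambda> + t) = \<Sum>\<^sub>k H(k) t\<^sup>k\<close>. Dividing
  the adjugate identity \<open>B(z)(z - A) = p(z)\<close> by \<open>q(z)\<close> gives \<open>(\<Sum>\<^sub>k H(k) t\<^sup>k)(t - M) = t\<^sup>m\<close>,
  i.e. \<open>H(k - 1) = H(k) M\<close> for \<open>k \<noteq> m\<close> (with \<open>H(-1) = 0\<close>) and \<open>H(m - 1) = H(m) M + 1\<close>.
  Hence \<open>P = H(m - 1)\<close> satisfies \<open>P M\<^sup>m = H(0) M = 0\<close>, so \<open>P\<close> vanishes on the range of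
  \<open>M\<^sup>m\<close>, which by B\'ezout contains every other generalised eigenspace; and
  \<open>P - 1 = H(m) M = H(2m - 1) M\<^sup>m\<close> vanishes on \<open>W\<^sub>\<lambda> = ker M\<^sup>m\<close>. By Cayley--Hamilton the
  generalised eigenspaces span \<open>\<complex>\<^sup>n\<close>, so \<open>P\<close> is the spectral projection. Finally
  \<open>H(m - 2) = P M = N P\<close>, since \<open>P\<close> is idempotent and commutes with \<open>M\<close>.
\<close>

section \<open>Evaluating polynomials at square matrices\<close>

definition poly_mat :: "'a::comm_ring_1 mat \<Rightarrow> 'a poly \<Rightarrow> 'a mat" where
  "poly_mat A p =
     mat (dim_row A) (dim_row A) (\<lambda>(i,j). \<Sum>k\<le>degree p. coeff p k * (A ^\<^sub>m k) $$ (i,j))"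

lemma poly_mat_eq_sum_lessThan:
  assumes "degree p < N"
  shows "poly_mat A p =
           mat (dim_row A) (dim_row A) (\<lambda>(i,j). \<Sum>k<N. coeff p k * (A ^\<^sub>m k) $$ (i,j))"
proof -
  have "(\<Sum>k<N. coeff p k * (A ^\<^sub>m k) $$ (i,j)) = (\<Sum>k\<le>degree p. coeff p k * (A ^\<^sub>m k) $$ (i,j))"
    for i j
    by (rule sum.mono_neutral_right) (use assms in \<open>auto simp: coeff_eq_0\<close>)
  then show ?thesis
    unfolding poly_mat_def by simp
qed

lemma dim_poly_mat [simp]:
  "dim_row (poly_mat A p) = dim_row A" "dim_col (poly_mat A p) = dim_row A"
  unfolding poly_mat_def by auto

lemma poly_mat_carrier [simp]: "A \<in> carrier_mat n n \<Longrightarrow> poly_mat A p \<in> carrier_mat n n"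
  unfolding poly_mat_def by auto

lemma pow_mat_Suc_left: "A \<in> carrier_mat n n \<Longrightarrow> A ^\<^sub>m Suc k = A * A ^\<^sub>m k"
proof (induction k)
  case (Suc k)
  then have "A ^\<^sub>m Suc (Suc k) = A * A ^\<^sub>m k * A"
    by simp
  also have "\<dots> = A * (A ^\<^sub>m k * A)"
    using Suc.prems by (simp add: assoc_mult_mat[of _ n n _ n _ n])
  finally show ?case
    by simp
qed simp

lemma poly_mat_pCons:
  assumes A: "A \<in> carrier_mat n n"
  shows "poly_mat A (pCons a p) = a \<cdot>\<^sub>m 1\<^sub>m n + A * poly_mat A p"
proof (rule eq_matI)
  define N where "N = Suc (degree p)"
  have deg: "degree (pCons a p) < Suc N" "degree p < N"
    unfolding N_def by (simp_all add: degree_pCons_le le_imp_less_Suc)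
  fix i j
  assume "i < dim_row (a \<cdot>\<^sub>m 1\<^sub>m n + A * poly_mat A p)" "j < dim_col (a \<cdot>\<^sub>m 1\<^sub>m n + A * poly_mat A p)"
  then have i: "i < n" and j: "j < n"
    using A by auto
  have "poly_mat A (pCons a p) $$ (i,j) = (\<Sum>k<Suc N. coeff (pCons a p) k * (A ^\<^sub>m k) $$ (i,j))"
    using A i j by (simp add: poly_mat_eq_sum_lessThan[OF deg(1)])
  also have "\<dots> = a * (if i = j then 1 else 0) + (\<Sum>k<N. coeff p k * (A ^\<^sub>m Suc k) $$ (i,j))"
    using A i j by (subst sum.lessThan_Suc_shift) simp
  also have "(\<Sum>k<N. coeff p k * (A ^\<^sub>m Suc k) $$ (i,j))
           = (\<Sum>k<N. \<Sum>l<n. coeff p k * (A $$ (i,l) * (A ^\<^sub>m k) $$ (l,j)))"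
    using A i j
    by (simp del: pow_mat.simps
        add: pow_mat_Suc_left[OF A] scalar_prod_def sum_distrib_left lessThan_atLeast0)
  also have "\<dots> = (\<Sum>l<n. A $$ (i,l) * (\<Sum>k<N. coeff p k * (A ^\<^sub>m k) $$ (l,j)))"
    by (subst sum.swap) (simp add: sum_distrib_left mult_ac)
  also have "\<dots> = (A * poly_mat A p) $$ (i,j)"
    using A i j by (simp add: poly_mat_eq_sum_lessThan[OF deg(2)] scalar_prod_def lessThan_atLeast0)
  finally show "poly_mat A (pCons a p) $$ (i,j) = (a \<cdot>\<^sub>m 1\<^sub>m n + A * poly_mat A p) $$ (i,j)"
    using A i j by simp
qed (use A in auto)

lemma poly_mat_0 [simp]: "poly_mat A 0 = 0\<^sub>m (dim_row A) (dim_row A)"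
  unfolding poly_mat_def by (rule eq_matI) auto

lemma poly_mat_add:
  assumes A: "A \<in> carrier_mat n n"
  shows "poly_mat A (p + q) = poly_mat A p + poly_mat A q"
proof (induction p arbitrary: q rule: pCons_induct)
  case 0
  then show ?case
    using A by simp
next
  case (pCons a p)
  obtain b q' where q: "q = pCons b q'"
    by (cases q) auto
  have "poly_mat A (pCons a p + q) = (a + b) \<cdot>\<^sub>m 1\<^sub>m n + A * (poly_mat A p + poly_mat A q')"
    using pCons A by (simp add: q poly_mat_pCons)
  also have "\<dots> = (a \<cdot>\<^sub>m 1\<^sub>m n + A * poly_mat A p) + (b \<cdot>\<^sub>m 1\<^sub>m n + A * poly_mat A q')"
    using A by (subst mult_add_distrib_mat[of _ n n _ n]) (auto intro!: eq_matI simp: algebra_simps)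
  finally show ?case
    using A by (simp add: q poly_mat_pCons)
qed

lemma poly_mat_smult:
  assumes A: "A \<in> carrier_mat n n"
  shows "poly_mat A (Polynomial.smult c p) = c \<cdot>\<^sub>m poly_mat A p"
proof (induction p rule: pCons_induct)
  case 0
  then show ?case
    using A by (auto intro!: eq_matI)
next
  case (pCons a p)
  have "poly_mat A (Polynomial.smult c (pCons a p)) = (c * a) \<cdot>\<^sub>m 1\<^sub>m n + A * (c \<cdot>\<^sub>m poly_mat A p)"
    using pCons A by (simp add: poly_mat_pCons)
  also have "\<dots> = c \<cdot>\<^sub>m (a \<cdot>\<^sub>m 1\<^sub>m n + A * poly_mat A p)"
    using A by (auto intro!: eq_matI simp: algebra_simps mult_smult_distrib[of _ n n _ n])
  finally show ?case
    using A by (simp add: poly_mat_pCons)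
qed

lemma poly_mat_mult:
  assumes A: "A \<in> carrier_mat n n"
  shows "poly_mat A (p * q) = poly_mat A p * poly_mat A q"
proof (induction p rule: pCons_induct)
  case 0
  then show ?case
    using A by simp
next
  case (pCons a p)
  have "pCons a p * q = Polynomial.smult a q + pCons 0 (p * q)"
    by simp
  then have "poly_mat A (pCons a p * q)
           = a \<cdot>\<^sub>m poly_mat A q + (0 \<cdot>\<^sub>m 1\<^sub>m n + A * (poly_mat A p * poly_mat A q))"
    using pCons A by (simp add: poly_mat_pCons poly_mat_add[OF A] poly_mat_smult[OF A])
  also have "\<dots> = (a \<cdot>\<^sub>m 1\<^sub>m n + A * poly_mat A p) * poly_mat A q"
    using A by (subst add_mult_distrib_mat[of _ n n _ _ n])
      (auto intro!: eq_matI simp: algebra_simps assoc_mult_mat[of _ n n _ n _ n])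
  finally show ?case
    using A by (simp add: poly_mat_pCons)
qed

lemma poly_mat_1 [simp]: "A \<in> carrier_mat n n \<Longrightarrow> poly_mat A 1 = 1\<^sub>m n"
  by (simp add: one_pCons poly_mat_pCons del: pCons_one) (auto intro!: eq_matI)

lemma poly_mat_linear: "A \<in> carrier_mat n n \<Longrightarrow> poly_mat A [:-c, 1:] = A - c \<cdot>\<^sub>m 1\<^sub>m n"
  by (simp add: poly_mat_pCons) (auto intro!: eq_matI)

lemma poly_mat_power: "A \<in> carrier_mat n n \<Longrightarrow> poly_mat A (p ^ k) = poly_mat A p ^\<^sub>m k"
proof (induction k)
  case (Suc k)
  then show ?case
    using pow_mat_Suc_left[of "poly_mat A p" n k] by (simp add: poly_mat_mult)
qed simp

lemma poly_mat_mult_vec: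
  "A \<in> carrier_mat n n \<Longrightarrow> v \<in> carrier_vec n \<Longrightarrow>
     poly_mat A (p * q) *\<^sub>v v = poly_mat A p *\<^sub>v (poly_mat A q *\<^sub>v v)"
  by (simp add: poly_mat_mult assoc_mult_mat_vec[of _ n n _ n])


lemma poly_mat_mult_vec_carrier [simp]:
  "A \<in> carrier_mat n n \<Longrightarrow> v \<in> carrier_vec n \<Longrightarrow> poly_mat A p *\<^sub>v v \<in> carrier_vec n"
  by (rule mult_mat_vec_carrier) auto

section \<open>The Cayley--Hamilton theorem\<close>

abbreviation adj_char_poly_matrix :: "'a::comm_ring_1 mat \<Rightarrow> 'a poly mat" where
  "adj_char_poly_matrix A \<equiv> adj_mat (char_poly_matrix A)"

lemma char_poly_matrix_entry:
  "A \<in> carrier_mat n n \<Longrightarrow> l < n \<Longrightarrow> j < n \<Longrightarrow>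
     char_poly_matrix A $$ (l,j) = [:-(A $$ (l,j)), if l = j then 1 else 0:]"
  by (auto simp: char_poly_matrix_def)

lemma adj_char_poly_matrix_mult_entry:
  assumes A: "A \<in> carrier_mat n n" and i: "i < n" and j: "j < n"
  shows "(\<Sum>l<n. adj_char_poly_matrix A $$ (i,l) * [:-(A $$ (l,j)), if l = j then 1 else 0:])
           = (if i = j then char_poly A else 0)"
proof -
  have C: "char_poly_matrix A \<in> carrier_mat n n"
    using A by simp
  have "(if i = j then char_poly A else 0) = (adj_char_poly_matrix A * char_poly_matrix A) $$ (i,j)"
    using adj_mat(3)[OF C] i j by (simp add: char_poly_def)
  also have "\<dots> = (\<Sum>l<n. adj_char_poly_matrix A $$ (i,l) * char_poly_matrix A $$ (l,j))"
    using i j C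
    by (simp add: carrier_matD[OF adj_mat(1)[OF C]] scalar_prod_def lessThan_atLeast0)
  finally show ?thesis
    by (simp add: char_poly_matrix_entry[OF A _ j])
qed

lemma coeff_mult_linear:
  "coeff (p * [:c, d:]) k = c * coeff p k + d * (if k = 0 then 0 else coeff p (k - 1))"
proof -
  have "p * [:c, d:] = Polynomial.smult c p + pCons 0 (Polynomial.smult d p)"
    by (simp add: mult_pCons_right algebra_simps)
  then show ?thesis
    by (cases k) auto
qed

definition adj_coeff_mat :: "'a::comm_ring_1 mat \<Rightarrow> nat \<Rightarrow> 'a mat" where
  "adj_coeff_mat A k =
     mat (dim_row A) (dim_row A) (\<lambda>(i,j). coeff (adj_char_poly_matrix A $$ (i,j)) k)"

lemma dim_adj_coeff_mat [simp]:
  "dim_row (adj_coeff_mat A k) = dim_row A" "dim_col (adj_coeff_mat A k) = dim_row A"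
  unfolding adj_coeff_mat_def by auto

lemma adj_coeff_mat_carrier [simp]: "A \<in> carrier_mat n n \<Longrightarrow> adj_coeff_mat A k \<in> carrier_mat n n"
  unfolding adj_coeff_mat_def by auto

lemma coeff_char_poly_smult_one:
  assumes A: "A \<in> carrier_mat n n"
  shows "coeff (char_poly A) k \<cdot>\<^sub>m 1\<^sub>m n
           = (if k = 0 then 0\<^sub>m n n else adj_coeff_mat A (k - 1)) - adj_coeff_mat A k * A"
    (is "_ = ?R")
proof (rule eq_matI)
  fix i j
  assume "i < dim_row ?R" "j < dim_col ?R"
  then have i: "i < n" and j: "j < n"
    using A by auto
  let ?b = "\<lambda>l. adj_char_poly_matrix A $$ (i,l)"
  have "coeff (if i = j then char_poly A else 0) k
        = coeff (\<Sum>l<n. ?b l * [:-(A $$ (l,j)), if l = j then 1 else 0:]) k"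
    using adj_char_poly_matrix_mult_entry[OF A i j] by simp
  also have "\<dots> = (\<Sum>l<n. - (A $$ (l,j)) * coeff (?b l) k
                     + (if l = j then (if k = 0 then 0 else coeff (?b l) (k - 1)) else 0))"
    by (simp only: coeff_sum coeff_mult_linear) (rule sum.cong, auto)
  also have "\<dots> = (\<Sum>l<n. - (A $$ (l,j)) * coeff (?b l) k)
                  + (\<Sum>l<n. if l = j then (if k = 0 then 0 else coeff (?b l) (k - 1)) else 0)"
    by (rule sum.distrib)
  also have "\<dots> = (\<Sum>l<n. - (A $$ (l,j)) * coeff (?b l) k)
                  + (if k = 0 then 0 else coeff (?b j) (k - 1))"
    using j by (simp add: sum.delta)
  also have "\<dots> = ((if k = 0 then 0\<^sub>m n n else adj_coeff_mat A (k - 1)) - adj_coeff_mat A k * A) $$ (i,j)"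
    using A i j
    by (auto simp: adj_coeff_mat_def scalar_prod_def lessThan_atLeast0 sum_negf mult_ac)
  finally show "(coeff (char_poly A) k \<cdot>\<^sub>m 1\<^sub>m n) $$ (i,j) = ?R $$ (i,j)"
    using i j by (auto split: if_splits)
qed (use A in auto)

theorem cayley_hamilton:
  assumes A: "A \<in> carrier_mat n n"
  shows "poly_mat A (char_poly A) = 0\<^sub>m n n"
proof (rule eq_matI)
  define C where "C k = (if k = 0 then 0\<^sub>m n n else adj_coeff_mat A (k - 1))" for k
  have C_carrier: "C k \<in> carrier_mat n n" for k
    using A by (simp add: C_def)
  have telescope: "coeff (char_poly A) k \<cdot>\<^sub>m A ^\<^sub>m k = C k * A ^\<^sub>m k - C (Suc k) * A ^\<^sub>m Suc k"
    for k
  proof -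
    have "coeff (char_poly A) k \<cdot>\<^sub>m A ^\<^sub>m k = (coeff (char_poly A) k \<cdot>\<^sub>m 1\<^sub>m n) * A ^\<^sub>m k"
      using A by (auto intro!: eq_matI)
    also have "\<dots> = C k * A ^\<^sub>m k - (adj_coeff_mat A k * A) * A ^\<^sub>m k"
      unfolding coeff_char_poly_smult_one[OF A] C_def[symmetric]
      using A C_carrier by (intro minus_mult_distrib_mat[of _ n n]) auto
    also have "(adj_coeff_mat A k * A) * A ^\<^sub>m k = C (Suc k) * A ^\<^sub>m Suc k"
      using A by (simp del: pow_mat.simps
          add: pow_mat_Suc_left[OF A] C_def assoc_mult_mat[of _ n n _ n _ n])
    finally show ?thesis .
  qed
  define D where "D = n + (\<Sum>i<n. \<Sum>l<n. degree (adj_char_poly_matrix A $$ (i,l)))"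
  have "degree (adj_char_poly_matrix A $$ (i,l)) \<le> D" if "i < n" "l < n" for i l
  proof -
    have "degree (adj_char_poly_matrix A $$ (i,l)) \<le> (\<Sum>l<n. degree (adj_char_poly_matrix A $$ (i,l)))"
      using that by (intro member_le_sum) auto
    also have "\<dots> \<le> (\<Sum>i<n. \<Sum>l<n. degree (adj_char_poly_matrix A $$ (i,l)))"
      using that by (intro member_le_sum[where f = "\<lambda>i. \<Sum>l<n. degree (adj_char_poly_matrix A $$ (i,l))"]) auto
    finally show ?thesis
      unfolding D_def by simp
  qed
  then have C_vanishes: "C (Suc (Suc D)) = 0\<^sub>m n n"
    using A by (auto intro!: eq_matI simp: C_def adj_coeff_mat_def coeff_eq_0 le_imp_less_Suc)
  have deg: "degree (char_poly A) < Suc (Suc D)"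
    using degree_monic_char_poly[OF A] unfolding D_def by simp
  fix i j
  assume "i < dim_row (0\<^sub>m n n :: 'a mat)" "j < dim_col (0\<^sub>m n n :: 'a mat)"
  then have i: "i < n" and j: "j < n"
    by auto
  define f where "f k = (C k * A ^\<^sub>m k) $$ (i,j)" for k
  have "poly_mat A (char_poly A) $$ (i,j)
        = (\<Sum>k<Suc (Suc D). coeff (char_poly A) k * (A ^\<^sub>m k) $$ (i,j))"
    using A i j by (simp add: poly_mat_eq_sum_lessThan[OF deg])
  also have "\<dots> = (\<Sum>k<Suc (Suc D). f k - f (Suc k))"
  proof (rule sum.cong[OF refl])
    fix k
    have "coeff (char_poly A) k * (A ^\<^sub>m k) $$ (i,j) = (coeff (char_poly A) k \<cdot>\<^sub>m A ^\<^sub>m k) $$ (i,j)"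
      using A i j by simp
    also have "\<dots> = f k - f (Suc k)"
      unfolding telescope f_def using A carrier_matD[OF C_carrier] i j by (subst index_minus_mat) auto
    finally show "coeff (char_poly A) k * (A ^\<^sub>m k) $$ (i,j) = f k - f (Suc k)" .
  qed
  also have "\<dots> = f 0 - f (Suc (Suc D))"
    by (rule sum_lessThan_telescope')
  also have "f 0 = 0"
    using A i j by (simp add: f_def C_def)
  also have "f (Suc (Suc D)) = 0"
    using A i j by (simp add: f_def C_vanishes)
  finally show "poly_mat A (char_poly A) $$ (i,j) = 0\<^sub>m n n $$ (i,j)"
    using i j by simp
qed (use A in auto)

section \<open>Generalised eigenspaces span the whole space\<close>

lemma mult_mat_vec_zero [simp]: "X \<in> carrier_mat m n \<Longrightarrow> X *\<^sub>v 0\<^sub>v n = 0\<^sub>v m"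
  by (auto intro!: eq_vecI simp: scalar_prod_def)

lemma zero_mat_mult_vec [simp]: "v \<in> carrier_vec n \<Longrightarrow> 0\<^sub>m m n *\<^sub>v v = 0\<^sub>v m"
  by (auto intro!: eq_vecI simp: scalar_prod_def)

lemma mult_unit_vec_index:
  fixes X :: "'a::comm_ring_1 mat"
  assumes "X \<in> carrier_mat n n" "i < n" "j < n"
  shows "(X *\<^sub>v unit_vec n j) $ i = X $$ (i,j)"
proof -
  have delta: "(\<lambda>l. X $$ (i,l) * (if l = j then 1 else 0)) = (\<lambda>l. if l = j then X $$ (i,l) else 0)"
    by auto
  show ?thesis
    using assms by (simp add: scalar_prod_def unit_vec_def, subst delta, simp)
qed

lemma eq_mat_on_vecI:
  fixes X Y :: "'a::comm_ring_1 mat"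
  assumes X: "X \<in> carrier_mat n n" and Y: "Y \<in> carrier_mat n n"
    and eq: "\<And>v. v \<in> carrier_vec n \<Longrightarrow> X *\<^sub>v v = Y *\<^sub>v v"
  shows "X = Y"
proof (rule eq_matI)
  fix i j
  assume "i < dim_row Y" "j < dim_col Y"
  then have i: "i < n" and j: "j < n"
    using Y by auto
  show "X $$ (i,j) = Y $$ (i,j)"
    using mult_unit_vec_index[OF X i j] mult_unit_vec_index[OF Y i j] eq[of "unit_vec n j"] by simp
qed (use X Y in auto)

lemma coprime_linear_poly:
  fixes a b :: "'a::field"
  assumes "a \<noteq> b"
  shows "coprime [:-a, 1:] [:-b, 1:]"
proof (rule coprimeI)
  fix c
  assume "c dvd [:-a, 1:]" "c dvd [:-b, 1:]"
  then have "c dvd [:-a, 1:] - [:-b, 1:]"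
    by (rule dvd_diff)
  also have "[:-a, 1:] - [:-b, 1:] = [:b - a:]"
    by simp
  finally have "c dvd [:b - a:]" .
  moreover have "is_unit [:b - a:]"
    using assms by (simp add: is_unit_const_poly_iff)
  ultimately show "is_unit c"
    by (rule dvd_unit_imp_unit)
qed

lemma poly_mat_bezout:
  fixes A :: "'a::field_gcd mat"
  assumes A: "A \<in> carrier_mat n n" and "coprime f g"
  obtains a b where "poly_mat A (a * f) + poly_mat A (b * g) = 1\<^sub>m n"
proof
  let ?a = "fst (bezout_coefficients f g)" and ?b = "snd (bezout_coefficients f g)"
  have "?a * f + ?b * g = 1"
    using bezout_coefficients_fst_snd[of f g] coprime_imp_gcd_eq_1[OF assms(2)] by simp
  then show "poly_mat A (?a * f) + poly_mat A (?b * g) = 1\<^sub>m n"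
    using A by (simp flip: poly_mat_add)
qed

text \<open>By B\'ezout, a vector killed by \<open>g(A) f(A)\<close> with \<open>g, f\<close> coprime is the sum of one killed by
  \<open>f(A)\<close> and one killed by \<open>g(A)\<close>.\<close>

lemma eq_on_kernel_prod_linear_powers:
  fixes A X Y :: "'a::field_gcd mat"
  assumes A: "A \<in> carrier_mat n n" and X: "X \<in> carrier_mat n n" and Y: "Y \<in> carrier_mat n n"
    and S: "finite S"
    and eq: "\<And>\<mu> v. \<mu> \<in> S \<Longrightarrow> v \<in> carrier_vec n \<Longrightarrow>
               poly_mat A ([:-\<mu>, 1:] ^ e \<mu>) *\<^sub>v v = 0\<^sub>v n \<Longrightarrow> X *\<^sub>v v = Y *\<^sub>v v"
    and v: "v \<in> carrier_vec n" and ker: "poly_mat A (\<Prod>\<mu>\<in>S. [:-\<mu>, 1:] ^ e \<mu>) *\<^sub>v v = 0\<^sub>v n"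
  shows "X *\<^sub>v v = Y *\<^sub>v v"
  using S eq v ker
proof (induction S arbitrary: v rule: finite_induct)
  case empty
  then have "v = 0\<^sub>v n"
    using A by simp
  then show ?case
    using X Y by simp
next
  case (insert \<mu> S v)
  define g where "g = [:-\<mu>, 1:] ^ e \<mu>"
  define f where "f = (\<Prod>\<mu>\<in>S. [:-\<mu>, 1:] ^ e \<mu>)"
  have gf: "poly_mat A (g * f) *\<^sub>v v = 0\<^sub>v n"
    using insert by (simp add: g_def f_def)
  have "coprime [:-\<mu>, 1:] [:-\<nu>, 1:]" if "\<nu> \<in> S" for \<nu>
    using insert(2) that coprime_linear_poly by metis
  then have "coprime g f"
    unfolding g_def f_def by (intro prod_coprime_right) auto
  then obtain a b where ab: "poly_mat A (a * g) + poly_mat A (b * f) = 1\<^sub>m n"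
    using poly_mat_bezout[OF A] by blast
  define v\<^sub>1 where "v\<^sub>1 = poly_mat A (a * g) *\<^sub>v v"
  define v\<^sub>2 where "v\<^sub>2 = poly_mat A (b * f) *\<^sub>v v"
  have v_carrier: "v\<^sub>1 \<in> carrier_vec n" "v\<^sub>2 \<in> carrier_vec n"
    unfolding v\<^sub>1_def v\<^sub>2_def using A insert.prems(2) by auto
  have v_split: "v = v\<^sub>1 + v\<^sub>2"
    unfolding v\<^sub>1_def v\<^sub>2_def
    using A insert.prems(2) by (simp add: add_mult_distrib_mat_vec[of _ n n, symmetric] ab)
  have "poly_mat A f *\<^sub>v v\<^sub>1 = poly_mat A a *\<^sub>v (poly_mat A (g * f) *\<^sub>v v)"
    unfolding v\<^sub>1_def using A insert.prems(2) by (simp add: poly_mat_mult_vec[symmetric] mult_ac)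
  then have "poly_mat A f *\<^sub>v v\<^sub>1 = 0\<^sub>v n"
    using gf A by simp
  then have "X *\<^sub>v v\<^sub>1 = Y *\<^sub>v v\<^sub>1"
    using insert.IH[of v\<^sub>1] insert.prems(1) v_carrier(1) unfolding f_def by blast
  moreover have "poly_mat A g *\<^sub>v v\<^sub>2 = poly_mat A b *\<^sub>v (poly_mat A (g * f) *\<^sub>v v)"
    unfolding v\<^sub>2_def using A insert.prems(2) by (simp add: poly_mat_mult_vec[symmetric] mult_ac)
  then have "poly_mat A g *\<^sub>v v\<^sub>2 = 0\<^sub>v n"
    using gf A by simp
  then have "X *\<^sub>v v\<^sub>2 = Y *\<^sub>v v\<^sub>2"
    using insert.prems(1) v_carrier(2) unfolding g_def by blast
  ultimately show ?case
    using X Y v_carrier by (simp add: v_split mult_add_distrib_mat_vec[of _ n n])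
qed

lemma char_poly_nonzero: "A \<in> carrier_mat n n \<Longrightarrow> char_poly A \<noteq> 0"
  using degree_monic_char_poly[of A n] by auto

lemma eigenvalues_eq_roots_char_poly:
  fixes A :: "'a::field mat"
  shows "A \<in> carrier_mat n n \<Longrightarrow> {\<mu>. eigenvalue A \<mu>} = {z. poly (char_poly A) z = 0}"
  using eigenvalue_root_char_poly[of A n] by auto

lemma finite_eigenvalues:
  fixes A :: "'a::field mat"
  shows "A \<in> carrier_mat n n \<Longrightarrow> finite {\<mu>. eigenvalue A \<mu>}"
  using eigenvalues_eq_roots_char_poly[of A n] char_poly_nonzero[of A n] poly_roots_finite by metis

lemma char_poly_eq_prod_eigenvalues:
  fixes A :: "complex mat"
  assumes A: "A \<in> carrier_mat n n"
  shows "char_poly A = (\<Prod>\<mu>\<in>{\<mu>. eigenvalue A \<mu>}. [:-\<mu>, 1:] ^ alg_mult A \<mu>)"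
  using complex_poly_decompose[of "char_poly A"] degree_monic_char_poly[OF A]
  unfolding eigenvalues_eq_roots_char_poly[OF A] alg_mult_def by simp

lemma gen_eigenspace_eq_kernel:
  "A \<in> carrier_mat n n \<Longrightarrow>
     gen_eigenspace A \<mu> = {v \<in> carrier_vec n. poly_mat A ([:-\<mu>, 1:] ^ alg_mult A \<mu>) *\<^sub>v v = 0\<^sub>v n}"
  unfolding gen_eigenspace_def by (simp add: poly_mat_power poly_mat_linear)

lemma gen_eigenspace_carrier: "A \<in> carrier_mat n n \<Longrightarrow> v \<in> gen_eigenspace A \<mu> \<Longrightarrow> v \<in> carrier_vec n"
  unfolding gen_eigenspace_def by auto

lemma eq_mat_on_gen_eigenspacesI:
  fixes A X Y :: "complex mat"
  assumes A: "A \<in> carrier_mat n n" and X: "X \<in> carrier_mat n n" and Y: "Y \<in> carrier_mat n n"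
    and eq: "\<And>\<mu> v. eigenvalue A \<mu> \<Longrightarrow> v \<in> gen_eigenspace A \<mu> \<Longrightarrow> X *\<^sub>v v = Y *\<^sub>v v"
  shows "X = Y"
proof (rule eq_mat_on_vecI[OF X Y])
  fix v :: "complex vec"
  assume v: "v \<in> carrier_vec n"
  have "poly_mat A (\<Prod>\<mu>\<in>{\<mu>. eigenvalue A \<mu>}. [:-\<mu>, 1:] ^ alg_mult A \<mu>) *\<^sub>v v = 0\<^sub>v n"
    using cayley_hamilton[OF A] char_poly_eq_prod_eigenvalues[OF A] v by simp
  then show "X *\<^sub>v v = Y *\<^sub>v v"
    using eq_on_kernel_prod_linear_powers[OF A X Y finite_eigenvalues[OF A], of "alg_mult A"] v eq
    by (auto simp: gen_eigenspace_eq_kernel[OF A])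
qed

lemma poly_mat_mult_vec_gen_eigenspace:
  assumes A: "A \<in> carrier_mat n n" and v: "v \<in> gen_eigenspace A \<mu>"
  shows "poly_mat A p *\<^sub>v v \<in> gen_eigenspace A \<mu>"
proof -
  let ?r = "[:-\<mu>, 1:] ^ alg_mult A \<mu>"
  have v_carrier: "v \<in> carrier_vec n" and "poly_mat A ?r *\<^sub>v v = 0\<^sub>v n"
    using v gen_eigenspace_eq_kernel[OF A] by auto
  moreover have "poly_mat A ?r *\<^sub>v (poly_mat A p *\<^sub>v v) = poly_mat A p *\<^sub>v (poly_mat A ?r *\<^sub>v v)"
    using A v_carrier by (simp add: poly_mat_mult_vec[symmetric] mult.commute)
  ultimately show ?thesis
    using A by (simp add: gen_eigenspace_eq_kernel[OF A])
qed

section \<open>Taylor coefficients of \<open>B(z)/q(z)\<close>\<close>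

lemma poly_char_poly_matrix_entry:
  "A \<in> carrier_mat n n \<Longrightarrow> l < n \<Longrightarrow> j < n \<Longrightarrow>
     poly (char_poly_matrix A $$ (l,j)) z = (z \<cdot>\<^sub>m 1\<^sub>m n - A) $$ (l,j)"
  by (simp add: char_poly_matrix_entry)

lemma poly_adj_char_poly_matrix:
  assumes A: "A \<in> carrier_mat n n" and i: "i < n" and j: "j < n"
  shows "poly (adj_char_poly_matrix A $$ (i,j)) z = adj_mat (z \<cdot>\<^sub>m 1\<^sub>m n - A) $$ (i,j)"
proof -
  define C where "C = char_poly_matrix A"
  define Z where "Z = z \<cdot>\<^sub>m 1\<^sub>m n - A"
  have C: "C \<in> carrier_mat n n" and Z: "Z \<in> carrier_mat n n"
    unfolding C_def Z_def using A by auto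
  have "poly (det (mat_delete C j i)) z = det (mat_delete Z j i)"
  proof (rule poly_det_cong[OF mat_delete_carrier[OF Z] mat_delete_carrier[OF C]])
    fix a b
    assume "a < n - 1" "b < n - 1"
    then show "poly (mat_delete C j i $$ (a, b)) z = mat_delete Z j i $$ (a, b)"
      unfolding mat_delete_def using C Z
      by (simp add: C_def Z_def[symmetric] poly_char_poly_matrix_entry[OF A, folded Z_def])
  qed
  then show ?thesis
    using C Z i j unfolding C_def[symmetric] Z_def[symmetric] adj_mat_def cofactor_def by simp
qed

definition q_poly :: "complex mat \<Rightarrow> complex \<Rightarrow> complex poly" where
  "q_poly A lam = (\<Prod>\<mu>\<in>{\<mu>. eigenvalue A \<mu> \<and> \<mu> \<noteq> lam}. [:-\<mu>, 1:] ^ alg_mult A \<mu>)"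

lemma poly_q_poly: "poly (q_poly A lam) z = q_fun A lam z"
  by (simp add: q_poly_def q_fun_def poly_prod)

lemma finite_other_eigenvalues:
  fixes A :: "'a::field mat"
  assumes "A \<in> carrier_mat n n"
  shows "finite {\<mu>. eigenvalue A \<mu> \<and> \<mu> \<noteq> lam}"
  by (rule finite_subset[OF _ finite_eigenvalues[OF assms]]) auto

lemma poly_q_poly_nonzero: "A \<in> carrier_mat n n \<Longrightarrow> poly (q_poly A lam) lam \<noteq> 0"
  using finite_other_eigenvalues[of A n lam] by (simp add: q_poly_def poly_prod prod_zero_iff)

lemma char_poly_eq_linear_power_mult_q_poly:
  assumes A: "A \<in> carrier_mat n n" and "eigenvalue A lam"
  shows "char_poly A = [:-lam, 1:] ^ alg_mult A lam * q_poly A lam"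
proof -
  have "{\<mu>. eigenvalue A \<mu> \<and> \<mu> \<noteq> lam} = {\<mu>. eigenvalue A \<mu>} - {lam}"
    by auto
  then show ?thesis
    unfolding char_poly_eq_prod_eigenvalues[OF A] q_poly_def
    using prod.remove[OF finite_eigenvalues[OF A], of lam] assms(2) by simp
qed

lemma poly_has_fps_expansion: "poly p has_fps_expansion fps_of_poly (p :: complex poly)"
proof -
  have "eval_fps (fps_of_poly p) has_fps_expansion fps_of_poly p"
    by (rule eval_fps_has_fps_expansion) simp
  moreover have "eval_fps (fps_of_poly p) = poly p"
    by (rule ext) simp
  ultimately show ?thesis
    by simp
qed

text \<open>The Taylor series of \<open>B\<^sub>i\<^sub>j(z)/q(z)\<close> at \<open>\<lambda>\<close>, in the variable \<open>t = z - \<lambda>\<close>.\<close>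

definition taylor_fps :: "complex mat \<Rightarrow> complex \<Rightarrow> nat \<Rightarrow> nat \<Rightarrow> complex fps" where
  "taylor_fps A lam i j =
     fps_of_poly (adj_char_poly_matrix A $$ (i,j) \<circ>\<^sub>p [:lam, 1:]) / fps_of_poly (q_poly A lam \<circ>\<^sub>p [:lam, 1:])"

lemma higher_deriv_adj_res_div_q_fun:
  assumes A: "A \<in> carrier_mat n n" and i: "i < n" and j: "j < n"
  shows "(deriv ^^ t) (\<lambda>z. adj_res A z $$ (i,j) / q_fun A lam z) lam = fact t * fps_nth (taylor_fps A lam i j) t"
proof -
  define b where "b = adj_char_poly_matrix A $$ (i,j) \<circ>\<^sub>p [:lam, 1:]"
  define q where "q = q_poly A lam \<circ>\<^sub>p [:lam, 1:]"
  have shift: "(\<lambda>z. adj_res A z $$ (i,j) / q_fun A lam z) \<circ> (\<lambda>t. lam + t) = (\<lambda>t. poly b t / poly q t)"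
    using A by (auto simp: b_def q_def poly_pcompose poly_adj_char_poly_matrix[OF A i j] adj_res_def
        poly_q_poly add.commute)
  have "fps_nth (fps_of_poly q) 0 \<noteq> 0"
    using poly_q_poly_nonzero[OF A, of lam] by (simp add: q_def poly_pcompose poly_0_coeff_0[symmetric])
  then have "(\<lambda>t. poly b t / poly q t) has_fps_expansion taylor_fps A lam i j"
    unfolding taylor_fps_def b_def[symmetric] q_def[symmetric]
    by (rule has_fps_expansion_divide'[OF poly_has_fps_expansion poly_has_fps_expansion])
  moreover have "(deriv ^^ t) (\<lambda>z. adj_res A z $$ (i,j) / q_fun A lam z) lam
      = (deriv ^^ t) (\<lambda>t. poly b t / poly q t) 0"
    by (subst higher_deriv_shift_0) (simp add: shift)
  ultimately show ?thesis
    using fps_nth_fps_expansion by simp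
qed

lemma pcompose_power: "(p ^ k) \<circ>\<^sub>p q = (p \<circ>\<^sub>p q) ^ k"
  by (induction k) (simp_all add: pcompose_1 pcompose_mult)

text \<open>Dividing \<open>B(z)(z - A) = p(z)\<close> by \<open>q(z)\<close> and substituting \<open>z = \<lambda> + t\<close>.\<close>

lemma taylor_fps_mult_shifted_char_matrix:
  assumes A: "A \<in> carrier_mat n n" and ev: "eigenvalue A lam" and i: "i < n" and j: "j < n"
  shows "(\<Sum>l<n. taylor_fps A lam i l
            * fps_of_poly [:-((A - lam \<cdot>\<^sub>m 1\<^sub>m n) $$ (l,j)), if l = j then 1 else 0:])
         = (if i = j then fps_X ^ alg_mult A lam else 0)"
proof -
  let ?s = "[:lam, 1:]"
  let ?c = "\<lambda>l. [:-(A $$ (l,j)), if l = j then 1 else 0:]"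
  define q where "q = fps_of_poly (q_poly A lam \<circ>\<^sub>p ?s)"
  define b where "b l = fps_of_poly (adj_char_poly_matrix A $$ (i,l) \<circ>\<^sub>p ?s)" for l
  have "fps_nth q 0 \<noteq> 0"
    using poly_q_poly_nonzero[OF A, of lam] by (simp add: q_def poly_pcompose poly_0_coeff_0[symmetric])
  then have taylor_fps_eq: "taylor_fps A lam i l = b l * inverse q" for l
    unfolding taylor_fps_def b_def[symmetric] q_def[symmetric] by (rule fps_divide_unit)
  have shifted_c: "fps_of_poly (?c l \<circ>\<^sub>p ?s)
                     = fps_of_poly [:-((A - lam \<cdot>\<^sub>m 1\<^sub>m n) $$ (l,j)), if l = j then 1 else 0:]"
    if "l < n" for l
    using A that j by (simp add: pcompose_pCons algebra_simps)
  have "(\<Sum>l<n. b l * fps_of_poly (?c l \<circ>\<^sub>p ?s))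
        = fps_of_poly ((\<Sum>l<n. adj_char_poly_matrix A $$ (i,l) * ?c l) \<circ>\<^sub>p ?s)"
    by (simp only: pcompose_sum pcompose_mult fps_of_poly_sum fps_of_poly_mult b_def)
  also have "\<dots> = (if i = j then fps_X ^ alg_mult A lam * q else 0)"
    unfolding adj_char_poly_matrix_mult_entry[OF A i j] char_poly_eq_linear_power_mult_q_poly[OF A ev] q_def
    by (simp add: pcompose_mult pcompose_power pcompose_pCons fps_of_poly_mult fps_of_poly_power)
  finally have sum_eq: "(\<Sum>l<n. b l * fps_of_poly (?c l \<circ>\<^sub>p ?s))
                          = (if i = j then fps_X ^ alg_mult A lam * q else 0)" .
  have "(\<Sum>l<n. taylor_fps A lam i l
            * fps_of_poly [:-((A - lam \<cdot>\<^sub>m 1\<^sub>m n) $$ (l,j)), if l = j then 1 else 0:])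
        = (\<Sum>l<n. b l * fps_of_poly (?c l \<circ>\<^sub>p ?s)) * inverse q"
    unfolding taylor_fps_eq sum_distrib_right
    by (rule sum.cong) (use A j shifted_c in \<open>simp_all add: mult_ac\<close>)
  also have "\<dots> = (if i = j then fps_X ^ alg_mult A lam else 0)"
    unfolding sum_eq using \<open>fps_nth q 0 \<noteq> 0\<close> by (simp add: mult.assoc inverse_mult_eq_1')
  finally show ?thesis .
qed

definition taylor_mat :: "complex mat \<Rightarrow> complex \<Rightarrow> nat \<Rightarrow> complex mat" where
  "taylor_mat A lam t = mat (dim_row A) (dim_row A) (\<lambda>(i,j). fps_nth (taylor_fps A lam i j) t)"

lemma dim_taylor_mat [simp]:
  "dim_row (taylor_mat A lam t) = dim_row A" "dim_col (taylor_mat A lam t) = dim_row A"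
  unfolding taylor_mat_def by auto

lemma taylor_mat_carrier [simp]: "A \<in> carrier_mat n n \<Longrightarrow> taylor_mat A lam t \<in> carrier_mat n n"
  unfolding taylor_mat_def by auto

lemma taylor_mat_eq_higher_deriv:
  assumes "A \<in> carrier_mat n n"
  shows "taylor_mat A lam t = mat n n (\<lambda>(i,j).
           1 / fact t * (deriv ^^ t) (\<lambda>z. adj_res A z $$ (i,j) / q_fun A lam z) lam)"
  using assms by (auto intro!: eq_matI simp: higher_deriv_adj_res_div_q_fun taylor_mat_def)

lemma fps_nth_mult_linear:
  fixes F :: "'a::comm_ring_1 fps"
  shows "fps_nth (F * fps_of_poly [:c, d:]) t = c * fps_nth F t + d * (if t = 0 then 0 else fps_nth F (t - 1))"
proof -
  have "F * fps_of_poly [:c, d:] = F * fps_const c + (F * fps_const d) * fps_X"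
    by (simp add: fps_of_poly_pCons fps_of_poly_const algebra_simps)
  then show ?thesis
    by (simp only: fps_add_nth fps_X_mult_right_nth) (simp add: mult_ac)
qed

lemma taylor_mat_recurrence:
  assumes A: "A \<in> carrier_mat n n" and ev: "eigenvalue A lam"
  shows "(if t = 0 then 0\<^sub>m n n else taylor_mat A lam (t - 1))
           = taylor_mat A lam t * (A - lam \<cdot>\<^sub>m 1\<^sub>m n) + (if t = alg_mult A lam then 1\<^sub>m n else 0\<^sub>m n n)"
    (is "_ = ?R")
proof (rule eq_matI)
  define M where "M = A - lam \<cdot>\<^sub>m 1\<^sub>m n"
  have M: "M \<in> carrier_mat n n"
    unfolding M_def using A by auto
  fix i j
  assume "i < dim_row ?R" "j < dim_col ?R"
  then have i: "i < n" and j: "j < n"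
    using A by (auto split: if_splits)
  let ?g = "\<lambda>l. taylor_fps A lam i l"
  let ?prev = "\<lambda>l. if t = 0 then 0 else fps_nth (?g l) (t - 1)"
  have "(\<Sum>l<n. -(M $$ (l,j)) * fps_nth (?g l) t + (if l = j then 1 else 0) * ?prev l)
        = (if i = j \<and> t = alg_mult A lam then 1 else 0)"
    using arg_cong[OF taylor_fps_mult_shifted_char_matrix[OF A ev i j], of "\<lambda>F. fps_nth F t"]
    unfolding M_def[symmetric] by (simp only: fps_sum_nth fps_nth_mult_linear) simp
  moreover have "(\<Sum>l<n. -(M $$ (l,j)) * fps_nth (?g l) t + (if l = j then 1 else 0) * ?prev l)
        = (\<Sum>l<n. (if l = j then ?prev l else 0) - fps_nth (?g l) t * M $$ (l,j))"
    by (rule sum.cong) auto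
  moreover have "\<dots> = ?prev j - (\<Sum>l<n. fps_nth (?g l) t * M $$ (l,j))"
    using j by (simp only: sum_subtractf sum.delta') simp
  ultimately have "?prev j = (\<Sum>l<n. fps_nth (?g l) t * M $$ (l,j))
                              + (if i = j \<and> t = alg_mult A lam then 1 else 0)"
    by (simp add: algebra_simps)
  then show "(if t = 0 then 0\<^sub>m n n else taylor_mat A lam (t - 1)) $$ (i,j) = ?R $$ (i,j)"
    using A i j M unfolding M_def[symmetric]
    by (auto simp: taylor_mat_def scalar_prod_def lessThan_atLeast0 carrier_matD)
qed (use A in auto)

section \<open>The spectral projection as a Taylor coefficient\<close>

lemma alg_mult_pos:
  fixes A :: "complex mat"
  assumes A: "A \<in> carrier_mat n n" and "eigenvalue A lam"
  shows "alg_mult A lam \<ge> 1"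
proof -
  have "poly (char_poly A) lam = 0"
    using assms eigenvalue_root_char_poly[OF A] by simp
  then have "order lam (char_poly A) \<noteq> 0"
    using order_root char_poly_nonzero[OF A] by blast
  then show ?thesis
    unfolding alg_mult_def by simp
qed

context
  fixes A :: "complex mat" and n :: nat and lam :: complex
  assumes A: "A \<in> carrier_mat n n" and ev: "eigenvalue A lam"
begin

private abbreviation (input) M :: "complex mat" where "M \<equiv> A - lam \<cdot>\<^sub>m 1\<^sub>m n"
private abbreviation (input) m :: nat where "m \<equiv> alg_mult A lam"
private abbreviation (input) H :: "nat \<Rightarrow> complex mat" where "H \<equiv> taylor_mat A lam"
private abbreviation (input) P :: "complex mat" where "P \<equiv> taylor_mat A lam (alg_mult A lam - 1)"

private lemma M_carrier [simp]: "M \<in> carrier_mat n n"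
  using A by auto

private lemma taylor_mat_mult_M_carrier [simp]: "H t * M \<in> carrier_mat n n"
  using A by auto

private lemma M_power_eq_poly_mat: "M ^\<^sub>m k = poly_mat A ([:-lam, 1:] ^ k)"
  using A by (simp add: poly_mat_power poly_mat_linear)

lemma taylor_mat_0_mult: "H 0 * M = 0\<^sub>m n n"
  using taylor_mat_recurrence[OF A ev, of 0] alg_mult_pos[OF A ev] A by simp

lemma taylor_mat_eq_Suc_mult: "Suc t \<noteq> m \<Longrightarrow> H t = H (Suc t) * M"
  using taylor_mat_recurrence[OF A ev, of "Suc t"] A by simp

lemma taylor_mat_pred_alg_mult: "P = H m * M + 1\<^sub>m n"
  using taylor_mat_recurrence[OF A ev, of m] alg_mult_pos[OF A ev] by simp

lemma taylor_mat_eq_shift_mult_power: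
  "(\<And>u. s < u \<Longrightarrow> u \<le> s + k \<Longrightarrow> u \<noteq> m) \<Longrightarrow> H s = H (s + k) * M ^\<^sub>m k"
proof (induction k arbitrary: s)
  case 0
  show ?case
    using A by simp
next
  case (Suc k)
  have "H s = H (Suc s) * M"
    using Suc.prems by (intro taylor_mat_eq_Suc_mult) auto
  also have "H (Suc s) = H (s + Suc k) * M ^\<^sub>m k"
    using Suc.IH[of "Suc s"] Suc.prems by simp
  finally show ?case
    using A by (simp add: assoc_mult_mat[of _ n n _ n _ n])
qed

lemma taylor_mat_pred_mult_power_eq_0: "P * M ^\<^sub>m m = 0\<^sub>m n n"
proof -
  have m: "m = Suc (m - 1)"
    using alg_mult_pos[OF A ev] by simp
  have "P * M ^\<^sub>m m = (P * M ^\<^sub>m (m - 1)) * M"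
    by (subst m) (use A in \<open>simp add: assoc_mult_mat[of _ n n _ n _ n]\<close>)
  also have "P * M ^\<^sub>m (m - 1) = H 0"
    using taylor_mat_eq_shift_mult_power[of 0 "m - 1"] by simp
  finally show ?thesis
    using taylor_mat_0_mult by simp
qed

lemma taylor_mat_alg_mult_mult: "H m * M = H (m + (m - 1)) * M ^\<^sub>m m"
proof -
  have m: "m = Suc (m - 1)"
    using alg_mult_pos[OF A ev] by simp
  have "H m = H (m + (m - 1)) * M ^\<^sub>m (m - 1)"
    by (rule taylor_mat_eq_shift_mult_power) auto
  then show ?thesis
    by (subst (2) m) (use A in \<open>simp add: assoc_mult_mat[of _ n n _ n _ n]\<close>)
qed

lemma taylor_mat_pred_fixes_gen_eigenspace: "v \<in> gen_eigenspace A lam \<Longrightarrow> P *\<^sub>v v = v"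
proof -
  assume "v \<in> gen_eigenspace A lam"
  then have v: "v \<in> carrier_vec n" and ker: "M ^\<^sub>m m *\<^sub>v v = 0\<^sub>v n"
    using gen_eigenspace_eq_kernel[OF A] M_power_eq_poly_mat by auto
  have "(H m * M) *\<^sub>v v = H (m + (m - 1)) *\<^sub>v (M ^\<^sub>m m *\<^sub>v v)"
    unfolding taylor_mat_alg_mult_mult using A v by (simp add: assoc_mult_mat_vec[of _ n n _ n])
  then have "(H m * M) *\<^sub>v v = 0\<^sub>v n"
    using ker A by simp
  then show "P *\<^sub>v v = v"
    unfolding taylor_mat_pred_alg_mult using A v by (simp add: add_mult_distrib_mat_vec[of _ n n])
qed

lemma taylor_mat_pred_kills_gen_eigenspace:
  assumes \<mu>: "eigenvalue A \<mu>" "\<mu> \<noteq> lam" and v: "v \<in> gen_eigenspace A \<mu>"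
  shows "P *\<^sub>v v = 0\<^sub>v n"
proof -
  let ?g = "[:-lam, 1:] ^ m" and ?h = "[:-\<mu>, 1:] ^ alg_mult A \<mu>"
  have v_carrier: "v \<in> carrier_vec n" and ker: "poly_mat A ?h *\<^sub>v v = 0\<^sub>v n"
    using v gen_eigenspace_eq_kernel[OF A] by auto
  have "coprime ?g ?h"
    using coprime_linear_poly[of lam \<mu>] \<mu> by simp
  then obtain a b where ab: "poly_mat A (a * ?g) + poly_mat A (b * ?h) = 1\<^sub>m n"
    using poly_mat_bezout[OF A] by blast
  text \<open>\<open>v\<close> lies in the range of \<open>M\<^sup>m\<close>, which \<open>P\<close> annihilates.\<close>
  have "v = poly_mat A (a * ?g) *\<^sub>v v + poly_mat A (b * ?h) *\<^sub>v v"
    using A v_carrier by (simp add: add_mult_distrib_mat_vec[of _ n n, symmetric] ab)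
  also have "poly_mat A (b * ?h) *\<^sub>v v = 0\<^sub>v n"
    using A v_carrier ker by (simp add: poly_mat_mult_vec)
  also have "poly_mat A (a * ?g) *\<^sub>v v = M ^\<^sub>m m *\<^sub>v (poly_mat A a *\<^sub>v v)"
    using A v_carrier by (simp add: M_power_eq_poly_mat poly_mat_mult_vec[symmetric] mult.commute)
  finally have "P *\<^sub>v v = (P * M ^\<^sub>m m) *\<^sub>v (poly_mat A a *\<^sub>v v)"
    using A v_carrier by (simp add: M_power_eq_poly_mat assoc_mult_mat_vec[of _ n n _ n])
  then show ?thesis
    using taylor_mat_pred_mult_power_eq_0 A v_carrier by simp
qed

lemma spectral_proj_eq_taylor_mat: "spectral_proj A lam = P"
  unfolding spectral_proj_def
proof (rule the_equality)
  have dim: "dim_row A = n"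
    using A by simp
  show "P \<in> carrier_mat (dim_row A) (dim_row A) \<and> (\<forall>v\<in>gen_eigenspace A lam. P *\<^sub>v v = v) \<and>
    (\<forall>\<mu>. eigenvalue A \<mu> \<and> \<mu> \<noteq> lam \<longrightarrow> (\<forall>v\<in>gen_eigenspace A \<mu>. P *\<^sub>v v = 0\<^sub>v (dim_row A)))"
    unfolding dim using A taylor_mat_pred_fixes_gen_eigenspace taylor_mat_pred_kills_gen_eigenspace by auto
  fix Q
  assume Q: "Q \<in> carrier_mat (dim_row A) (dim_row A) \<and> (\<forall>v\<in>gen_eigenspace A lam. Q *\<^sub>v v = v) \<and>
    (\<forall>\<mu>. eigenvalue A \<mu> \<and> \<mu> \<noteq> lam \<longrightarrow> (\<forall>v\<in>gen_eigenspace A \<mu>. Q *\<^sub>v v = 0\<^sub>v (dim_row A)))"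
  show "Q = P"
  proof (rule eq_mat_on_gen_eigenspacesI[OF A])
    fix \<mu> v
    assume "eigenvalue A \<mu>" "v \<in> gen_eigenspace A \<mu>"
    then show "Q *\<^sub>v v = P *\<^sub>v v"
      using Q taylor_mat_pred_fixes_gen_eigenspace taylor_mat_pred_kills_gen_eigenspace dim
      by (cases "\<mu> = lam") auto
  qed (use Q dim A in auto)
qed

lemma spectral_proj_carrier: "spectral_proj A lam \<in> carrier_mat n n"
  using A by (simp add: spectral_proj_eq_taylor_mat)

lemma spectral_proj_mult_vec_gen_eigenspace:
  assumes "eigenvalue A \<mu>" and "v \<in> gen_eigenspace A \<mu>"
  shows "spectral_proj A lam *\<^sub>v v = (if \<mu> = lam then v else 0\<^sub>v n)"
  using assms taylor_mat_pred_fixes_gen_eigenspace taylor_mat_pred_kills_gen_eigenspace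
  by (auto simp: spectral_proj_eq_taylor_mat)

lemma spectral_proj_idempotent: "spectral_proj A lam * spectral_proj A lam = spectral_proj A lam"
proof (rule eq_mat_on_gen_eigenspacesI[OF A])
  fix \<mu> v
  assume \<mu>: "eigenvalue A \<mu>" and v: "v \<in> gen_eigenspace A \<mu>"
  have "(spectral_proj A lam * spectral_proj A lam) *\<^sub>v v = spectral_proj A lam *\<^sub>v (spectral_proj A lam *\<^sub>v v)"
    using spectral_proj_carrier gen_eigenspace_carrier[OF A v] by (simp add: assoc_mult_mat_vec[of _ n n _ n])
  also have "\<dots> = spectral_proj A lam *\<^sub>v v"
    using spectral_proj_mult_vec_gen_eigenspace[OF \<mu> v] spectral_proj_carrier by auto
  finally show "(spectral_proj A lam * spectral_proj A lam) *\<^sub>v v = spectral_proj A lam *\<^sub>v v" .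
qed (use spectral_proj_carrier in auto)

lemma spectral_proj_commute: "M * spectral_proj A lam = spectral_proj A lam * M"
proof (rule eq_mat_on_gen_eigenspacesI[OF A])
  fix \<mu> v
  assume \<mu>: "eigenvalue A \<mu>" and v: "v \<in> gen_eigenspace A \<mu>"
  have v_carrier: "v \<in> carrier_vec n"
    using gen_eigenspace_carrier[OF A v] .
  have "M *\<^sub>v v \<in> gen_eigenspace A \<mu>"
    using poly_mat_mult_vec_gen_eigenspace[OF A v, of "[:-lam, 1:]"] A by (simp add: poly_mat_linear)
  then have "M *\<^sub>v (spectral_proj A lam *\<^sub>v v) = spectral_proj A lam *\<^sub>v (M *\<^sub>v v)"
    using spectral_proj_mult_vec_gen_eigenspace[OF \<mu>] v A by auto
  then show "(M * spectral_proj A lam) *\<^sub>v v = (spectral_proj A lam * M) *\<^sub>v v"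
    using spectral_proj_carrier v_carrier by (simp add: assoc_mult_mat_vec[of _ n n _ n])
qed (use spectral_proj_carrier in auto)

lemma nilp_part_mult_spectral_proj:
  assumes "m \<ge> 2"
  shows "nilp_part A lam * spectral_proj A lam = H (m - 2)"
proof -
  have "nilp_part A lam * spectral_proj A lam = M * spectral_proj A lam * spectral_proj A lam"
    unfolding nilp_part_def using A by simp
  also have "\<dots> = M * (spectral_proj A lam * spectral_proj A lam)"
    using spectral_proj_carrier by (intro assoc_mult_mat[of _ n n _ n _ n]) auto
  also have "\<dots> = spectral_proj A lam * M"
    using spectral_proj_idempotent spectral_proj_commute by simp
  also have "\<dots> = H (m - 2)"
    using taylor_mat_eq_Suc_mult[of "m - 2"] assms
    by (simp add: spectral_proj_eq_taylor_mat Suc_diff_Suc numeral_2_eq_2)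
  finally show ?thesis .
qed

end

theorem theorem5:
  fixes A :: "complex mat" and n :: nat and lam :: complex
  assumes "A \<in> carrier_mat n n" and "eigenvalue A lam"
  shows "spectral_proj A lam = mat n n (\<lambda>(j, k).
            (1 / fact (alg_mult A lam - 1)) *
            (deriv ^^ (alg_mult A lam - 1)) (\<lambda>z. adj_res A z $$ (j, k) / q_fun A lam z) lam)
       \<and> (alg_mult A lam \<ge> 2 \<longrightarrow>
         nilp_part A lam * spectral_proj A lam = mat n n (\<lambda>(j, k).
            (1 / fact (alg_mult A lam - 2)) *
            (deriv ^^ (alg_mult A lam - 2)) (\<lambda>z. adj_res A z $$ (j, k) / q_fun A lam z) lam))"
  using spectral_proj_eq_taylor_mat[OF assms] nilp_part_mult_spectral_proj[OF assms]
    taylor_mat_eq_higher_deriv[OF assms(1)] by simp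

end
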